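(* Let $G=(\mathcal{S},\mathbb{A})$ be a finite directed acyclic graph with a unique initial state $s_0\in\mathcal{S}$ having no incoming edges, such that every state is reachable from $s_0$. Let $\mathcal{X}\subset\mathcal{S}$ be the set of terminal states (states with no outgoing edges), and assume $\mathcal{X}\neq\emptyset$. Let $\mathcal{E}:\mathcal{S}\to\mathbb{R}$ be an energy function defined on all states, and for an edge $(s\to s')\in\mathbb{A}$ put $\mathcal{E}(s\to s')=\mathcal{E}(s')-\mathcal{E}(s)$. The reward of a terminal state $x$ is $R(x)=e^{-\mathcal{E}(x)}$. Let $P_F$ be a forward policy, i.e. for each nonterminal $s$ a probability distribution $P_F(\cdot\mid s)$ on the children of $s$; let $P_B$ be a backward policy, i.e. for each $s'\neq s_0$ a probability distribution $P_B(\cdot\mid s')$ on the parents of $s'$; and let $\widetilde F:\mathcal{S}\to(0,\infty)$ (the forward-looking flow) satisfy $\widetilde F(x)=1$ for every $x\in\mathcal{X}$. Suppose that for every edge $(s\to s')\in\mathbb{A}$ the FL-DB loss $$\mathcal{L}(s,s')=\Big(\log\widetilde F(s)+\log P_F(s'\mid s)-\log\widetilde F(s')-\log P_B(s\mid s')+\mathcal{E}(s\to s')\Big)^2$$ vanishes, i.e. $\widetilde F(s)P_F(s'\mid s)=\widetilde F(s')P_B(s\mid s')e^{-\mathcal{E}(s\to s')}$. Then $P_F$ samples terminal states proportionally to the reward: for every $x\in\mathcal{X}$, $$P_F^\top(x)=\frac{e^{-\mathcal{E}(x)}}{\sum_{y\in\mathcal{X}}e^{-\mathcal{E}(y)}},$$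 where $P_F^\top(x)=\sum_{\tau=(s_0\to s_1\to\cdots\to s_n=x)}\prod_{i=1}^n P_F(s_i\mid s_{i-1})$ is the probability that a trajectory started at $s_0$ and following $P_F$ until reaching a terminal state ends at $x$ (the sum is over all complete trajectories, i.e. directed paths in $G$ from $s_0$ to $x$).
   Context: This is the correctness statement for "forward-looking GFlowNets". The forward-looking flow $\widetilde F$ is intended to represent $e^{\mathcal{E}(s)}F(s)$, where $F$ is an ordinary GFlowNet state flow; at terminal states the ordinary flow equals the reward $e^{-\mathcal{E}(x)}$, which corresponds to the normalization $\widetilde F(x)=1$ for $x\in\mathcal{X}$. *)

theory Defs
  imports Complex_Main
begin

definition is_path :: "('a \<times> 'a) set \<Rightarrow> 'a list \<Rightarrow> bool" where
  "is_path E xs \<longleftrightarrow> xs \<noteq> [] \<and> (\<forall>i < length xs - 1. (xs ! i, xs ! Suc i) \<in> E)"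

definition trajectories :: "('a \<times> 'a) set \<Rightarrow> 'a \<Rightarrow> 'a \<Rightarrow> 'a list set" where
  "trajectories E s0 x = {xs. is_path E xs \<and> hd xs = s0 \<and> last xs = x}"

text \<open>Probability of a trajectory under PF, where PF s s' = P_F(s' | s).\<close>
definition path_prob :: "('a \<Rightarrow> 'a \<Rightarrow> real) \<Rightarrow> 'a list \<Rightarrow> real" where
  "path_prob PF xs = (\<Prod>i < length xs - 1. PF (xs ! i) (xs ! Suc i))"

definition term_prob :: "('a \<times> 'a) set \<Rightarrow> 'a \<Rightarrow> ('a \<Rightarrow> 'a \<Rightarrow> real) \<Rightarrow> 'a \<Rightarrow> real" where
  "term_prob E s0 PF x = (\<Sum>xs \<in> trajectories E s0 x. path_prob PF xs)"

definition terminal_states :: "'a set \<Rightarrow> ('a \<times> 'a) set \<Rightarrow> 'a set" where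
  "terminal_states S E = {s \<in> S. \<not> (\<exists>s'. (s, s') \<in> E)}"

end

theory Submission
  imports Defs
begin

text \<open>Rescaling by the reward turns the forward-looking flow into an ordinary one:
\<open>F s = Ft s * exp (- En s)\<close> satisfies the plain detailed-balance equations
\<open>F s * PF s s' = F s' * PB s' s\<close>. Summing these over the parents of a state and
using that \<open>PB\<close> is a distribution shows, by induction along the acyclic graph, that
the probability of reaching \<open>s\<close> from \<open>s0\<close> is \<open>F s / F s0\<close>. Counting the edge flows
once by their sources and once by their targets shows that \<open>F s0\<close> equals the total
flow into terminal states, which is the sum of the rewards since \<open>Ft = 1\<close> there.\<close>

lemma is_path_snoc:
  assumes "xs \<noteq> []"
  shows "is_path E (xs @ [y]) \<longleftrightarrow> is_path E xs \<and> (last xs, y) \<in> E"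
proof -
  obtain n where n: "length xs = Suc n" using assms by (cases xs) auto
  have "is_path E (xs @ [y]) \<longleftrightarrow> (\<forall>i < Suc n. ((xs @ [y]) ! i, (xs @ [y]) ! Suc i) \<in> E)"
    using n by (simp add: is_path_def)
  also have "\<dots> \<longleftrightarrow> (xs ! n, y) \<in> E \<and> (\<forall>i < n. (xs ! i, xs ! Suc i) \<in> E)"
    unfolding All_less_Suc using n by (simp add: nth_append)
  also have "\<dots> \<longleftrightarrow> is_path E xs \<and> (last xs, y) \<in> E"
    using n assms by (auto simp: is_path_def last_conv_nth)
  finally show ?thesis .
qed

lemma path_prob_snoc:
  assumes "xs \<noteq> []"
  shows "path_prob PF (xs @ [y]) = path_prob PF xs * PF (last xs) y"
proof -
  obtain n where n: "length xs = Suc n" using assms by (cases xs) auto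
  have "path_prob PF (xs @ [y]) = PF (xs ! n) y * (\<Prod>i < n. PF (xs ! i) (xs ! Suc i))"
    unfolding path_prob_def using n by (simp add: prod.lessThan_Suc nth_append)
  then show ?thesis using n assms by (simp add: path_prob_def last_conv_nth)
qed

lemma trajectories_start:
  assumes "\<forall>s. (s, s0) \<notin> E"
  shows "trajectories E s0 s0 = {[s0]}"
proof (intro equalityI subsetI)
  fix xs assume xs: "xs \<in> trajectories E s0 s0"
  then have "xs \<noteq> []" by (simp add: trajectories_def is_path_def)
  then obtain ys where ys: "xs = ys @ [s0]"
    using xs by (cases xs rule: rev_exhaust) (auto simp: trajectories_def)
  have "ys = []"
  proof (rule ccontr)
    assume "ys \<noteq> []"
    then have "(last ys, s0) \<in> E" using xs ys by (simp add: trajectories_def is_path_snoc)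
    then show False using assms by blast
  qed
  then show "xs \<in> {[s0]}" using ys by simp
qed (simp add: trajectories_def is_path_def)

lemma trajectories_snoc:
  assumes "s \<noteq> s0"
  shows "trajectories E s0 s = (\<lambda>xs. xs @ [s]) ` (\<Union>p \<in> {p. (p, s) \<in> E}. trajectories E s0 p)"
proof (intro equalityI subsetI)
  fix xs assume xs: "xs \<in> trajectories E s0 s"
  then have "xs \<noteq> []" by (simp add: trajectories_def is_path_def)
  then obtain ys where ys: "xs = ys @ [s]"
    using xs by (cases xs rule: rev_exhaust) (auto simp: trajectories_def)
  have "ys \<noteq> []" using xs ys assms by (auto simp: trajectories_def)
  then have "ys \<in> trajectories E s0 (last ys)" "(last ys, s) \<in> E"
    using xs ys by (auto simp: trajectories_def is_path_snoc)
  then show "xs \<in> (\<lambda>xs. xs @ [s]) ` (\<Union>p \<in> {p. (p, s) \<in> E}. trajectories E s0 p)"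
    using ys by (auto intro!: image_eqI)
next
  fix xs assume "xs \<in> (\<lambda>xs. xs @ [s]) ` (\<Union>p \<in> {p. (p, s) \<in> E}. trajectories E s0 p)"
  then obtain ys p where "xs = ys @ [s]" "(p, s) \<in> E" "ys \<in> trajectories E s0 p" by blast
  moreover from this have "ys \<noteq> []" by (simp add: trajectories_def is_path_def)
  ultimately show "xs \<in> trajectories E s0 s"
    unfolding trajectories_def by (auto simp: is_path_snoc)
qed

lemma finite_parents:
  assumes "finite E"
  shows "finite {p. (p, s) \<in> E}"
proof -
  have "{p. (p, s) \<in> E} \<subseteq> fst ` E" by force
  then show ?thesis using assms finite_subset by blast
qed

lemma finite_trajectories:
  assumes "finite E" "acyclic E" "\<forall>s. (s, s0) \<notin> E"
  shows "finite (trajectories E s0 s)"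
  using finite_acyclic_wf[OF assms(1,2)]
proof (induction s rule: wf_induct_rule)
  case (less s)
  show ?case
  proof (cases "s = s0")
    case True
    then show ?thesis by (simp add: trajectories_start[OF assms(3)])
  next
    case False
    then show ?thesis
      using less finite_parents[OF assms(1)] by (simp add: trajectories_snoc)
  qed
qed

lemma term_prob_start:
  assumes "\<forall>s. (s, s0) \<notin> E"
  shows "term_prob E s0 PF s0 = 1"
  by (simp add: term_prob_def trajectories_start[OF assms] path_prob_def)

lemma term_prob_snoc:
  assumes "finite E" "acyclic E" "\<forall>s. (s, s0) \<notin> E" and "s \<noteq> s0"
  shows "term_prob E s0 PF s = (\<Sum>p \<in> {p. (p, s) \<in> E}. term_prob E s0 PF p * PF p s)"
proof -
  let ?P = "{p. (p, s) \<in> E}"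
  have "term_prob E s0 PF s = (\<Sum>xs \<in> (\<Union>p \<in> ?P. trajectories E s0 p). path_prob PF (xs @ [s]))"
    unfolding term_prob_def trajectories_snoc[OF assms(4)]
    by (rule sum.reindex_cong[where l = "\<lambda>xs. xs @ [s]"]) (auto intro: inj_onI)
  also have "\<dots> = (\<Sum>p \<in> ?P. \<Sum>xs \<in> trajectories E s0 p. path_prob PF (xs @ [s]))"
    using finite_parents[OF assms(1)] finite_trajectories[OF assms(1-3)]
    by (intro sum.UNION_disjoint) (auto simp: trajectories_def)
  also have "\<dots> = (\<Sum>p \<in> ?P. \<Sum>xs \<in> trajectories E s0 p. path_prob PF xs * PF p s)"
    by (intro sum.cong refl)
      (auto simp: trajectories_def is_path_def path_prob_snoc)
  finally show ?thesis by (simp add: term_prob_def sum_distrib_right)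
qed

lemma term_prob_detailed_balance:
  fixes F :: "'a \<Rightarrow> real"
  assumes fin: "finite E" and sub: "E \<subseteq> S \<times> S" and acyc: "acyclic E"
    and init: "\<forall>s. (s, s0) \<notin> E" and F_s0: "F s0 \<noteq> 0"
    and DB: "\<forall>(p, s) \<in> E. F p * PF p s = F s * PB s p"
    and PB_sum: "\<forall>s \<in> S - {s0}. (\<Sum>p \<in> {p. (p, s) \<in> E}. PB s p) = 1"
  shows "s \<in> S \<Longrightarrow> term_prob E s0 PF s = F s / F s0"
  using finite_acyclic_wf[OF fin acyc]
proof (induction s rule: wf_induct_rule)
  case (less s)
  show ?case
  proof (cases "s = s0")
    case True
    then show ?thesis using F_s0 by (simp add: term_prob_start[OF init])
  next
    case False
    have "term_prob E s0 PF s = (\<Sum>p \<in> {p. (p, s) \<in> E}. F p / F s0 * PF p s)"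
      unfolding term_prob_snoc[OF fin acyc init False]
      using less.IH sub by (intro sum.cong) auto
    also have "\<dots> = (\<Sum>p \<in> {p. (p, s) \<in> E}. F s * PB s p / F s0)"
      using DB by (intro sum.cong) auto
    also have "\<dots> = F s * (\<Sum>p \<in> {p. (p, s) \<in> E}. PB s p) / F s0"
      by (simp add: sum_distrib_left sum_divide_distrib)
    finally show ?thesis using PB_sum less.prems False by simp
  qed
qed

lemma flow_initial_eq_terminal_sum:
  fixes F :: "'a \<Rightarrow> real"
  assumes fin: "finite S" and sub: "E \<subseteq> S \<times> S" and s0: "s0 \<in> S"
    and init: "\<forall>s. (s, s0) \<notin> E"
    and DB: "\<forall>(p, s) \<in> E. F p * PF p s = F s * PB s p"
    and PF_sum: "\<forall>s \<in> S - terminal_states S E. (\<Sum>s' \<in> {s'. (s, s') \<in> E}. PF s s') = 1"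
    and PB_sum: "\<forall>s \<in> S - {s0}. (\<Sum>p \<in> {p. (p, s) \<in> E}. PB s p) = 1"
  shows "F s0 = sum F (terminal_states S E)"
proof -
  let ?T = "terminal_states S E"
  have children: "{s. (p, s) \<in> E} = {s \<in> S. (p, s) \<in> E}" for p using sub by blast
  have parents: "{p. (p, s) \<in> E} = {p \<in> S. (p, s) \<in> E}" for s using sub by blast
  have outflow: "(\<Sum>s \<in> {s \<in> S. (p, s) \<in> E}. F p * PF p s) = (if p \<notin> ?T then F p else 0)"
    if "p \<in> S" for p
  proof (cases "p \<in> ?T")
    case True
    then have no_children: "{s \<in> S. (p, s) \<in> E} = {}" by (auto simp: terminal_states_def)
    show ?thesis unfolding no_children using True by simp
  next
    case False
    then show ?thesis
      using PF_sum that by (simp add: children sum_distrib_left[symmetric])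
  qed
  have inflow: "(\<Sum>p \<in> {p \<in> S. (p, s) \<in> E}. F p * PF p s) = (if s \<noteq> s0 then F s else 0)"
    if "s \<in> S" for s
  proof (cases "s = s0")
    case True
    then show ?thesis using init by simp
  next
    case False
    have "(\<Sum>p \<in> {p \<in> S. (p, s) \<in> E}. F p * PF p s) = F s * (\<Sum>p \<in> {p. (p, s) \<in> E}. PB s p)"
      unfolding parents sum_distrib_left using DB by (intro sum.cong) auto
    then show ?thesis using PB_sum that False by simp
  qed
  have "sum F (S - ?T) = (\<Sum>p \<in> S. \<Sum>s \<in> {s \<in> S. (p, s) \<in> E}. F p * PF p s)"
    using fin outflow by (simp add: set_diff_eq sum.inter_filter)
  also have "\<dots> = (\<Sum>s \<in> S. \<Sum>p \<in> {p \<in> S. (p, s) \<in> E}. F p * PF p s)"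
    using fin fin by (rule sum.swap_restrict)
  also have "\<dots> = sum F (S - {s0})"
    using fin inflow by (simp add: set_diff_eq sum.inter_filter)
  finally have "sum F S - sum F ?T = sum F S - F s0"
    using fin s0 by (simp add: sum_diff terminal_states_def sum_diff1)
  then show ?thesis by simp
qed

lemma forward_looking_detailed_balance:
  fixes Ft En :: "'a \<Rightarrow> real"
  assumes "Ft s * PF s s' = Ft s' * PB s' s * exp (- (En s' - En s))"
  shows "Ft s * exp (- En s) * PF s s' = Ft s' * exp (- En s') * PB s' s"
proof -
  have "exp (- (En s' - En s)) * exp (- En s) = exp (- En s')"
    by (simp add: exp_add[symmetric])
  then show ?thesis using arg_cong[OF assms, of "\<lambda>t. t * exp (- En s)"]
    by (simp add: algebra_simps)
qed

theorem proposition4p2: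
  fixes S :: "'a set" and E :: "('a \<times> 'a) set" and s0 :: 'a
    and En :: "'a \<Rightarrow> real"
    and PF :: "'a \<Rightarrow> 'a \<Rightarrow> real"   \<comment> \<open>PF s s' = P_F(s' | s)\<close>
    and PB :: "'a \<Rightarrow> 'a \<Rightarrow> real"   \<comment> \<open>PB s' s = P_B(s | s')\<close>
    and Ft :: "'a \<Rightarrow> real"
  assumes finS: "finite S"
    and E_sub: "E \<subseteq> S \<times> S"
    and acyc: "acyclic E"
    and s0_in: "s0 \<in> S"
    and s0_init: "\<forall>s. (s, s0) \<notin> E"
    and reach: "\<forall>s \<in> S. (s0, s) \<in> E\<^sup>*"
    and X_ne: "terminal_states S E \<noteq> {}"
    and PF_nonneg: "\<forall>s s'. (s, s') \<in> E \<longrightarrow> PF s s' \<ge> 0"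
    and PF_sum: "\<forall>s \<in> S - terminal_states S E. (\<Sum>s' \<in> {s'. (s, s') \<in> E}. PF s s') = 1"
    and PB_nonneg: "\<forall>s s'. (s, s') \<in> E \<longrightarrow> PB s' s \<ge> 0"
    and PB_sum: "\<forall>s' \<in> S - {s0}. (\<Sum>s \<in> {s. (s, s') \<in> E}. PB s' s) = 1"
    and Ft_pos: "\<forall>s \<in> S. Ft s > 0"
    and Ft_term: "\<forall>x \<in> terminal_states S E. Ft x = 1"
    and FLDB: "\<forall>(s, s') \<in> E. Ft s * PF s s' = Ft s' * PB s' s * exp (- (En s' - En s))"
  shows "\<forall>x \<in> terminal_states S E.
           term_prob E s0 PF x = exp (- En x) / (\<Sum>y \<in> terminal_states S E. exp (- En y))"
proof -
  define F where "F s = Ft s * exp (- En s)" for s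
  have fin_E: "finite E"
    using finite_subset[OF E_sub] finS by blast
  have DB: "\<forall>(p, s) \<in> E. F p * PF p s = F s * PB s p"
    using FLDB forward_looking_detailed_balance[of Ft] by (fastforce simp: F_def)
  have F_s0: "F s0 = (\<Sum>y \<in> terminal_states S E. exp (- En y))"
    unfolding flow_initial_eq_terminal_sum[OF finS E_sub s0_in s0_init DB PF_sum PB_sum]
    using Ft_term by (intro sum.cong) (auto simp: F_def)
  have "F s0 \<noteq> 0"
    using Ft_pos s0_in by (fastforce simp: F_def)
  show ?thesis
  proof
    fix x assume x: "x \<in> terminal_states S E"
    then have "term_prob E s0 PF x = F x / F s0"
      using term_prob_detailed_balance[OF fin_E E_sub acyc s0_init \<open>F s0 \<noteq> 0\<close> DB PB_sum]
      by (simp add: terminal_states_def)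
    moreover have "F x = exp (- En x)"
      using Ft_term x by (simp add: F_def)
    ultimately show "term_prob E s0 PF x = exp (- En x) / (\<Sum>y \<in> terminal_states S E. exp (- En y))"
      by (simp only: F_s0)
  qed
qed

end
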